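(* Let $p(L,M,D;\mu\to1)$ be a generative reasoning model, let $\alpha\in L$, and let $\Delta\subseteq L$ be finite with $[\![\Delta]\!]^{\max}=[\![\Delta]\!]_p^{\max}$. Then $p(\alpha\mid\Delta)=1$ if and only if $S\models\alpha$ for every cardinality-maximal consistent subset $S$ of $\Delta$.
   Context: Fix a multiset of data $\{d_1,\dots,d_K\}$ with $K\ge1$, and a propositional language $L$ over finitely many atoms, with set of models (truth assignments) $\mathcal M$. A function $m:\{d_1,\dots,d_K\}\to\mathcal M$ assigns to each datum the model it supports. The probability of a model $n$ is $p(n)=|\{k:m(d_k)=n\}|/K$. For $\mu\in(0,1)$ and $\alpha\in L$, set $p(\alpha\mid m)=\mu$ if $m$ satisfies $\alpha$ and $1-\mu$ otherwise. For finite $\Delta$, set $p(\Delta\mid m)=\prod_{\beta\in\Delta}p(\beta\mid m)$, which is $1$ for empty $\Delta$. In $p(L,M,D;\mu\to1)$, $$p(\alpha\mid\Delta)=\lim_{\mu\to1^-}\frac{\sum_{m}p(\alpha\mid m)p(\Delta\mid m)p(m)}{\sum_m p(\Delta\mid m)p(m)}.$$ Notation and definitions: - For $S\subseteq L$, $[\![S]\!]$ is the set of models satisfying every formula of $S$, and $[\![S]\!]_p=\{m\in[\![S]\!]:p(m)\neq0\}$. - $S\models\alpha$ means $[\![S]\!]\subseteq[\![\alpha]\!]$. - $S\subseteq\Delta$ is a maximal consistent subset if $[\![S]\!]\neq\emptyset$ and $[\![S\cup\{\beta\}]\!]=\emptyset$ for all $\beta\in\Delta\setminus S$; a cardinality-maximal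 consistent subset is one of maximum cardinality among these, and $MCS(\Delta)$ is the set of them. - Analogously, maximal possible subsets use $[\![\cdot]\!]_p$ in place of $[\![\cdot]\!]$, and $MPS(\Delta)$ is the set of those of maximum cardinality. - $[\![\Delta]\!]^{\max}=\bigcup_{S\in MCS(\Delta)}[\![S]\!]$ and $[\![\Delta]\!]_p^{\max}=\bigcup_{S\in MPS(\Delta)}[\![S]\!]_p$. *)

theory Defs
  imports Complex_Main
begin

datatype 'a form = Atom 'a | Top | Bot | Neg "'a form" | Conj "'a form" "'a form"
  | Disj "'a form" "'a form" | Impl "'a form" "'a form"

type_synonym 'a model = "'a \<Rightarrow> bool"

fun sat :: "'a model \<Rightarrow> 'a form \<Rightarrow> bool" where
  "sat v (Atom a) = v a"
| "sat v Top = True"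
| "sat v Bot = False"
| "sat v (Neg f) = (\<not> sat v f)"
| "sat v (Conj f g) = (sat v f \<and> sat v g)"
| "sat v (Disj f g) = (sat v f \<or> sat v g)"
| "sat v (Impl f g) = (sat v f \<longrightarrow> sat v g)"

definition mods :: "'a form set \<Rightarrow> 'a model set" where
  "mods S = {v. \<forall>\<beta>\<in>S. sat v \<beta>}"

definition entails :: "'a form set \<Rightarrow> 'a form \<Rightarrow> bool" where
  "entails S \<alpha> \<longleftrightarrow> mods S \<subseteq> {v. sat v \<alpha>}"

text \<open>Data d_1..d_K given as list ds (K = length ds), m maps data to models.\<close>
definition prob :: "'d list \<Rightarrow> ('d \<Rightarrow> 'a model) \<Rightarrow> 'a model \<Rightarrow> real" where
  "prob ds m n = real (card {k. k < length ds \<and> m (ds ! k) = n}) / real (length ds)"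

definition mods_p :: "'d list \<Rightarrow> ('d \<Rightarrow> 'a model) \<Rightarrow> 'a form set \<Rightarrow> 'a model set" where
  "mods_p ds m S = {v \<in> mods S. prob ds m v \<noteq> 0}"

definition max_consistent :: "'a form set \<Rightarrow> 'a form set \<Rightarrow> bool" where
  "max_consistent \<Delta> S \<longleftrightarrow> S \<subseteq> \<Delta> \<and> mods S \<noteq> {} \<and>
     (\<forall>\<beta>\<in>\<Delta> - S. mods (insert \<beta> S) = {})"

definition MCS :: "'a form set \<Rightarrow> 'a form set set" where
  "MCS \<Delta> = {S. max_consistent \<Delta> S \<and> (\<forall>S'. max_consistent \<Delta> S' \<longrightarrow> card S' \<le> card S)}"

definition max_possible :: "'d list \<Rightarrow> ('d \<Rightarrow> 'a model) \<Rightarrow> 'a form set \<Rightarrow> 'a form set \<Rightarrow> bool" where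
  "max_possible ds m \<Delta> S \<longleftrightarrow> S \<subseteq> \<Delta> \<and> mods_p ds m S \<noteq> {} \<and>
     (\<forall>\<beta>\<in>\<Delta> - S. mods_p ds m (insert \<beta> S) = {})"

definition MPS :: "'d list \<Rightarrow> ('d \<Rightarrow> 'a model) \<Rightarrow> 'a form set \<Rightarrow> 'a form set set" where
  "MPS ds m \<Delta> = {S. max_possible ds m \<Delta> S \<and>
      (\<forall>S'. max_possible ds m \<Delta> S' \<longrightarrow> card S' \<le> card S)}"

definition mods_max :: "'a form set \<Rightarrow> 'a model set" where
  "mods_max \<Delta> = (\<Union>S\<in>MCS \<Delta>. mods S)"

definition mods_p_max :: "'d list \<Rightarrow> ('d \<Rightarrow> 'a model) \<Rightarrow> 'a form set \<Rightarrow> 'a model set" where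
  "mods_p_max ds m \<Delta> = (\<Union>S\<in>MPS ds m \<Delta>. mods_p ds m S)"

definition lik :: "real \<Rightarrow> 'a form \<Rightarrow> 'a model \<Rightarrow> real" where
  "lik \<mu> \<alpha> v = (if sat v \<alpha> then \<mu> else 1 - \<mu>)"

definition lik_set :: "real \<Rightarrow> 'a form set \<Rightarrow> 'a model \<Rightarrow> real" where
  "lik_set \<mu> \<Delta> v = (\<Prod>\<beta>\<in>\<Delta>. lik \<mu> \<beta> v)"

definition cond_prob_mu :: "'d list \<Rightarrow> ('d \<Rightarrow> 'a::finite model) \<Rightarrow> real \<Rightarrow> 'a form \<Rightarrow> 'a form set \<Rightarrow> real" where
  "cond_prob_mu ds m \<mu> \<alpha> \<Delta> =
     (\<Sum>v\<in>UNIV. lik \<mu> \<alpha> v * lik_set \<mu> \<Delta> v * prob ds m v) /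
     (\<Sum>v\<in>UNIV. lik_set \<mu> \<Delta> v * prob ds m v)"

definition cond_prob :: "'d list \<Rightarrow> ('d \<Rightarrow> 'a::finite model) \<Rightarrow> 'a form \<Rightarrow> 'a form set \<Rightarrow> real" where
  "cond_prob ds m \<alpha> \<Delta> = Lim (at_left 1) (\<lambda>\<mu>. cond_prob_mu ds m \<mu> \<alpha> \<Delta>)"

end

theory Submission
  imports Defs
begin

text \<open>
  A model v with p(v) > 0 contributes p(v) \<mu>^s (1 - \<mu>)^(|\<Delta>| - s) to the denominator
  of p(\<alpha> | \<Delta>), and that times p(\<alpha> | v) to the numerator, where s is the number of
  formulas of \<Delta> it satisfies. As \<mu> \<rightarrow> 1 only the possible models with the largest s
  survive, so p(\<alpha> | \<Delta>) is the probability of \<alpha> among them, and it equals 1 iff all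
  of them satisfy \<alpha>. These models are exactly the possible models of the largest
  maximal possible subsets of \<Delta>, which by hypothesis are the models of the
  cardinality-maximal consistent subsets.
\<close>

definition satisfied :: "'a form set \<Rightarrow> 'a model \<Rightarrow> 'a form set" where
  "satisfied \<Delta> v = {\<beta>\<in>\<Delta>. sat v \<beta>}"

definition prob_support :: "'d list \<Rightarrow> ('d \<Rightarrow> 'a model) \<Rightarrow> 'a model set" where
  "prob_support ds m = {v. prob ds m v \<noteq> 0}"

definition max_satisfied :: "'d list \<Rightarrow> ('d \<Rightarrow> 'a model) \<Rightarrow> 'a form set \<Rightarrow> nat" where
  "max_satisfied ds m \<Delta> = Max ((\<lambda>v. card (satisfied \<Delta> v)) ` prob_support ds m)"

definition best_models :: "'d list \<Rightarrow> ('d \<Rightarrow> 'a model) \<Rightarrow> 'a form set \<Rightarrow> 'a model set" where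
  "best_models ds m \<Delta> =
     {v\<in>prob_support ds m. card (satisfied \<Delta> v) = max_satisfied ds m \<Delta>}"

text \<open>p(\<Delta> | v) with the factor (1 - \<mu>)^(|\<Delta>| - M) common to all possible models
  removed, M being the maximal number of satisfied formulas.\<close>
definition rescaled_lik ::
    "'d list \<Rightarrow> ('d \<Rightarrow> 'a model) \<Rightarrow> 'a form set \<Rightarrow> real \<Rightarrow> 'a model \<Rightarrow> real" where
  "rescaled_lik ds m \<Delta> \<mu> v =
     (if v \<in> prob_support ds m
      then \<mu> ^ card (satisfied \<Delta> v) * (1 - \<mu>) ^ (max_satisfied ds m \<Delta> - card (satisfied \<Delta> v))
      else 0)"

lemma prob_nonneg: "0 \<le> prob ds m v"
  by (simp add: prob_def)

lemma hd_in_prob_support: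
  assumes "ds \<noteq> []"
  shows "m (hd ds) \<in> prob_support ds m"
proof -
  have "0 \<in> {k. k < length ds \<and> m (ds ! k) = m (hd ds)}"
    using assms by (simp add: hd_conv_nth)
  then have "card {k. k < length ds \<and> m (ds ! k) = m (hd ds)} \<noteq> 0"
    by (auto simp: card_eq_0_iff)
  then show ?thesis
    using assms by (simp add: prob_support_def prob_def)
qed

lemma lik_set_eq_powers:
  assumes "finite \<Delta>"
  shows "lik_set \<mu> \<Delta> v =
    \<mu> ^ card (satisfied \<Delta> v) * (1 - \<mu>) ^ (card \<Delta> - card (satisfied \<Delta> v))"
proof -
  have "lik_set \<mu> \<Delta> v =
      (\<Prod>\<beta>\<in>\<Delta> \<inter> {\<beta>. sat v \<beta>}. \<mu>) * (\<Prod>\<beta>\<in>\<Delta> \<inter> - {\<beta>. sat v \<beta>}. 1 - \<mu>)"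
    unfolding lik_set_def lik_def by (rule prod.If_cases[OF assms])
  also have "\<Delta> \<inter> {\<beta>. sat v \<beta>} = satisfied \<Delta> v"
    by (auto simp: satisfied_def)
  also have "\<Delta> \<inter> - {\<beta>. sat v \<beta>} = \<Delta> - satisfied \<Delta> v"
    by (auto simp: satisfied_def)
  finally have "lik_set \<mu> \<Delta> v = (\<Prod>\<beta>\<in>satisfied \<Delta> v. \<mu>) * (\<Prod>\<beta>\<in>\<Delta> - satisfied \<Delta> v. 1 - \<mu>)" .
  moreover have "card (\<Delta> - satisfied \<Delta> v) = card \<Delta> - card (satisfied \<Delta> v)"
    using assms by (intro card_Diff_subset) (auto simp: satisfied_def)
  ultimately show ?thesis
    by simp
qed

lemma weighted_sat_ratio_eq_1_iff:
  fixes w :: "'a model \<Rightarrow> real"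
  assumes "finite T" "T \<noteq> {}" "\<And>v. v \<in> T \<Longrightarrow> 0 < w v"
  shows "(\<Sum>v\<in>T. lik 1 \<alpha> v * w v) / (\<Sum>v\<in>T. w v) = 1 \<longleftrightarrow> (\<forall>v\<in>T. sat v \<alpha>)"
proof -
  have "0 < (\<Sum>v\<in>T. w v)"
    using assms by (intro sum_pos) auto
  then have "(\<Sum>v\<in>T. lik 1 \<alpha> v * w v) / (\<Sum>v\<in>T. w v) = 1 \<longleftrightarrow>
      (\<Sum>v\<in>T. (1 - lik 1 \<alpha> v) * w v) = 0"
    by (simp add: left_diff_distrib sum_subtractf)
  also have "\<dots> \<longleftrightarrow> (\<forall>v\<in>T. (1 - lik 1 \<alpha> v) * w v = 0)"
    using assms by (intro sum_nonneg_eq_0_iff) (auto simp: lik_def less_imp_le)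
  also have "\<dots> \<longleftrightarrow> (\<forall>v\<in>T. sat v \<alpha>)"
    using assms(3) by (force simp: lik_def)
  finally show ?thesis .
qed

lemma lik_tendsto: "((\<lambda>\<mu>. lik \<mu> \<alpha> v) \<longlongrightarrow> lik 1 \<alpha> v) (at_left 1)"
  by (cases "sat v \<alpha>") (auto simp: lik_def intro!: tendsto_eq_intros)

context
  fixes ds :: "'d list" and m :: "'d \<Rightarrow> 'a::finite model" and \<Delta> :: "'a form set"
begin

lemma card_satisfied_le_max_satisfied:
  "v \<in> prob_support ds m \<Longrightarrow> card (satisfied \<Delta> v) \<le> max_satisfied ds m \<Delta>"
  unfolding max_satisfied_def by (intro Max_ge) auto

lemma best_models_prob_pos: "v \<in> best_models ds m \<Delta> \<Longrightarrow> 0 < prob ds m v"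
  using prob_nonneg[of ds m v]
  by (simp add: best_models_def prob_support_def order_le_neq_trans)

lemma best_models_nonempty:
  assumes "ds \<noteq> []"
  shows "best_models ds m \<Delta> \<noteq> {}"
proof -
  have "max_satisfied ds m \<Delta> \<in> (\<lambda>v. card (satisfied \<Delta> v)) ` prob_support ds m"
    unfolding max_satisfied_def using hd_in_prob_support[OF assms] by (intro Max_in) auto
  then show ?thesis
    by (auto simp: best_models_def)
qed

lemma card_possible_subset_le_max_satisfied:
  assumes "finite \<Delta>" "S \<subseteq> \<Delta>" "mods_p ds m S \<noteq> {}"
  shows "card S \<le> max_satisfied ds m \<Delta>"
proof -
  obtain v where v: "v \<in> mods_p ds m S"
    using assms(3) by blast
  then have "S \<subseteq> satisfied \<Delta> v"
    using assms(2) by (auto simp: mods_p_def mods_def satisfied_def)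
  then have "card S \<le> card (satisfied \<Delta> v)"
    using assms(1) by (intro card_mono) (auto simp: satisfied_def)
  also have "\<dots> \<le> max_satisfied ds m \<Delta>"
    using v by (intro card_satisfied_le_max_satisfied) (simp add: mods_p_def prob_support_def)
  finally show ?thesis .
qed

lemma max_possible_satisfied:
  assumes "finite \<Delta>" "v \<in> best_models ds m \<Delta>"
  shows "max_possible ds m \<Delta> (satisfied \<Delta> v)"
  unfolding max_possible_def
proof (intro conjI ballI)
  show "satisfied \<Delta> v \<subseteq> \<Delta>" "mods_p ds m (satisfied \<Delta> v) \<noteq> {}"
    using assms(2)
    by (auto simp: satisfied_def mods_p_def mods_def best_models_def prob_support_def)
  fix \<beta> assume \<beta>: "\<beta> \<in> \<Delta> - satisfied \<Delta> v"
  then have "insert \<beta> (satisfied \<Delta> v) \<subseteq> \<Delta>"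
    by (auto simp: satisfied_def)
  moreover have "max_satisfied ds m \<Delta> < card (insert \<beta> (satisfied \<Delta> v))"
    using assms \<beta> by (simp add: best_models_def satisfied_def)
  ultimately show "mods_p ds m (insert \<beta> (satisfied \<Delta> v)) = {}"
    using card_possible_subset_le_max_satisfied[OF assms(1)] by (meson leD)
qed

lemma MPS_iff_card_eq_max_satisfied:
  assumes "finite \<Delta>" "ds \<noteq> []"
  shows "S \<in> MPS ds m \<Delta> \<longleftrightarrow> max_possible ds m \<Delta> S \<and> card S = max_satisfied ds m \<Delta>"
proof -
  obtain v where v: "v \<in> best_models ds m \<Delta>"
    using best_models_nonempty[OF assms(2)] by blast
  have bound: "card S' \<le> max_satisfied ds m \<Delta>" if "max_possible ds m \<Delta> S'" for S'
    using that card_possible_subset_le_max_satisfied[OF assms(1)]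
    by (simp add: max_possible_def)
  have witness: "max_possible ds m \<Delta> (satisfied \<Delta> v)"
    "card (satisfied \<Delta> v) = max_satisfied ds m \<Delta>"
    using max_possible_satisfied[OF assms(1) v] v by (simp_all add: best_models_def)
  show ?thesis
  proof
    assume "S \<in> MPS ds m \<Delta>"
    then have "max_possible ds m \<Delta> S" "max_satisfied ds m \<Delta> \<le> card S"
      using witness unfolding MPS_def by force+
    then show "max_possible ds m \<Delta> S \<and> card S = max_satisfied ds m \<Delta>"
      using bound le_antisym by blast
  next
    assume "max_possible ds m \<Delta> S \<and> card S = max_satisfied ds m \<Delta>"
    then show "S \<in> MPS ds m \<Delta>"
      using bound unfolding MPS_def by simp
  qed
qed

lemma mods_p_max_eq_best_models:
  assumes "finite \<Delta>" "ds \<noteq> []"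
  shows "mods_p_max ds m \<Delta> = best_models ds m \<Delta>"
proof (intro set_eqI iffI)
  fix v assume "v \<in> mods_p_max ds m \<Delta>"
  then obtain S where S: "S \<in> MPS ds m \<Delta>" "v \<in> mods_p ds m S"
    unfolding mods_p_max_def by blast
  then have v: "v \<in> prob_support ds m" and "S \<subseteq> satisfied \<Delta> v"
    using MPS_iff_card_eq_max_satisfied[OF assms]
    by (auto simp: mods_p_def mods_def satisfied_def prob_support_def max_possible_def)
  then have "card S \<le> card (satisfied \<Delta> v)"
    using assms(1) by (intro card_mono) (auto simp: satisfied_def)
  moreover have "card S = max_satisfied ds m \<Delta>"
    using S(1) MPS_iff_card_eq_max_satisfied[OF assms] by blast
  ultimately show "v \<in> best_models ds m \<Delta>"
    using v card_satisfied_le_max_satisfied[OF v] by (simp add: best_models_def)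
next
  fix v assume v: "v \<in> best_models ds m \<Delta>"
  then have "satisfied \<Delta> v \<in> MPS ds m \<Delta>"
    using MPS_iff_card_eq_max_satisfied[OF assms] max_possible_satisfied[OF assms(1)]
    by (simp add: best_models_def)
  moreover have "v \<in> mods_p ds m (satisfied \<Delta> v)"
    using v by (auto simp: mods_p_def mods_def satisfied_def best_models_def prob_support_def)
  ultimately show "v \<in> mods_p_max ds m \<Delta>"
    unfolding mods_p_max_def by blast
qed

lemma lik_set_mult_prob_eq:
  assumes "finite \<Delta>"
  shows "lik_set \<mu> \<Delta> v * prob ds m v =
    (1 - \<mu>) ^ (card \<Delta> - max_satisfied ds m \<Delta>) * (prob ds m v * rescaled_lik ds m \<Delta> \<mu> v)"
proof (cases "v \<in> prob_support ds m")
  case True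
  let ?s = "card (satisfied \<Delta> v)" and ?M = "max_satisfied ds m \<Delta>"
  have "?s \<le> ?M"
    using True by (rule card_satisfied_le_max_satisfied)
  moreover have "?M \<le> card \<Delta>"
    unfolding max_satisfied_def using True assms
    by (intro Max.boundedI) (auto simp: satisfied_def intro: card_mono)
  ultimately have "card \<Delta> - ?s = (card \<Delta> - ?M) + (?M - ?s)"
    by simp
  then show ?thesis
    using True by (simp add: lik_set_eq_powers[OF assms] rescaled_lik_def power_add)
next
  case False
  then show ?thesis
    by (simp add: rescaled_lik_def prob_support_def)
qed

lemma rescaled_lik_tendsto:
  "((\<lambda>\<mu>. rescaled_lik ds m \<Delta> \<mu> v) \<longlongrightarrow> of_bool (v \<in> best_models ds m \<Delta>)) (at_left 1)"
proof -
  have "rescaled_lik ds m \<Delta> 1 v = of_bool (v \<in> best_models ds m \<Delta>)"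
    using card_satisfied_le_max_satisfied[of v]
    by (auto simp: rescaled_lik_def best_models_def)
  moreover have "((\<lambda>\<mu>. rescaled_lik ds m \<Delta> \<mu> v) \<longlongrightarrow> rescaled_lik ds m \<Delta> 1 v) (at_left 1)"
    unfolding rescaled_lik_def by (auto intro!: tendsto_eq_intros)
  ultimately show ?thesis
    by simp
qed

lemma cond_prob_mu_eventually_eq:
  assumes "finite \<Delta>"
  shows "\<forall>\<^sub>F \<mu> in at_left 1. cond_prob_mu ds m \<mu> \<alpha> \<Delta> =
    (\<Sum>v\<in>UNIV. lik \<mu> \<alpha> v * (prob ds m v * rescaled_lik ds m \<Delta> \<mu> v)) /
    (\<Sum>v\<in>UNIV. prob ds m v * rescaled_lik ds m \<Delta> \<mu> v)"
proof (rule eventually_mono[OF eventually_at_left_real[of 0]])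
  fix \<mu> :: real assume "\<mu> \<in> {0<..<1}"
  then have c: "(1 - \<mu>) ^ (card \<Delta> - max_satisfied ds m \<Delta>) \<noteq> 0"
    by simp
  have "cond_prob_mu ds m \<mu> \<alpha> \<Delta> =
    ((1 - \<mu>) ^ (card \<Delta> - max_satisfied ds m \<Delta>) *
      (\<Sum>v\<in>UNIV. lik \<mu> \<alpha> v * (prob ds m v * rescaled_lik ds m \<Delta> \<mu> v))) /
    ((1 - \<mu>) ^ (card \<Delta> - max_satisfied ds m \<Delta>) *
      (\<Sum>v\<in>UNIV. prob ds m v * rescaled_lik ds m \<Delta> \<mu> v))"
    unfolding cond_prob_mu_def sum_distrib_left
    by (simp add: mult.assoc lik_set_mult_prob_eq[OF assms] mult.left_commute)
  then show "cond_prob_mu ds m \<mu> \<alpha> \<Delta> =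
    (\<Sum>v\<in>UNIV. lik \<mu> \<alpha> v * (prob ds m v * rescaled_lik ds m \<Delta> \<mu> v)) /
    (\<Sum>v\<in>UNIV. prob ds m v * rescaled_lik ds m \<Delta> \<mu> v)"
    by (simp only: mult_divide_mult_cancel_left[OF c])
qed simp

lemma cond_prob_eq_best_models_ratio:
  assumes "finite \<Delta>" "ds \<noteq> []"
  shows "cond_prob ds m \<alpha> \<Delta> =
    (\<Sum>v\<in>best_models ds m \<Delta>. lik 1 \<alpha> v * prob ds m v) / (\<Sum>v\<in>best_models ds m \<Delta>. prob ds m v)"
proof -
  let ?B = "best_models ds m \<Delta>"
  have sum_over_best:
    "(\<Sum>v\<in>UNIV. f v * of_bool (v \<in> ?B)) = (\<Sum>v\<in>?B. f v)" for f :: "'a model \<Rightarrow> real"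
    by (simp add: sum.inter_restrict[symmetric])
  have "0 < (\<Sum>v\<in>?B. prob ds m v)"
    using best_models_nonempty[OF assms(2)] best_models_prob_pos by (intro sum_pos) auto
  then have "((\<lambda>\<mu>. (\<Sum>v\<in>UNIV. lik \<mu> \<alpha> v * (prob ds m v * rescaled_lik ds m \<Delta> \<mu> v)) /
        (\<Sum>v\<in>UNIV. prob ds m v * rescaled_lik ds m \<Delta> \<mu> v)) \<longlongrightarrow>
      (\<Sum>v\<in>UNIV. lik 1 \<alpha> v * (prob ds m v * of_bool (v \<in> ?B))) /
        (\<Sum>v\<in>UNIV. prob ds m v * of_bool (v \<in> ?B))) (at_left 1)"
    by (intro tendsto_divide tendsto_sum tendsto_mult lik_tendsto rescaled_lik_tendsto tendsto_const)
      (simp add: sum_over_best)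
  then have "((\<lambda>\<mu>. (\<Sum>v\<in>UNIV. lik \<mu> \<alpha> v * (prob ds m v * rescaled_lik ds m \<Delta> \<mu> v)) /
        (\<Sum>v\<in>UNIV. prob ds m v * rescaled_lik ds m \<Delta> \<mu> v)) \<longlongrightarrow>
      (\<Sum>v\<in>?B. lik 1 \<alpha> v * prob ds m v) / (\<Sum>v\<in>?B. prob ds m v)) (at_left 1)"
    unfolding mult.assoc[symmetric] sum_over_best .
  then have "((\<lambda>\<mu>. cond_prob_mu ds m \<mu> \<alpha> \<Delta>) \<longlongrightarrow>
      (\<Sum>v\<in>?B. lik 1 \<alpha> v * prob ds m v) / (\<Sum>v\<in>?B. prob ds m v)) (at_left 1)"
    using tendsto_cong[OF cond_prob_mu_eventually_eq[OF assms(1)]] by simp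
  then show ?thesis
    unfolding cond_prob_def by (rule tendsto_Lim[OF trivial_limit_at_left_real])
qed

end

theorem corollary3:
  fixes ds :: "'d list" and m :: "'d \<Rightarrow> ('a::finite \<Rightarrow> bool)"
    and \<alpha> :: "'a form" and \<Delta> :: "'a form set"
  assumes "length ds \<ge> 1"
    and "finite \<Delta>"
    and "mods_max \<Delta> = mods_p_max ds m \<Delta>"
  shows "cond_prob ds m \<alpha> \<Delta> = 1 \<longleftrightarrow> (\<forall>S\<in>MCS \<Delta>. entails S \<alpha>)"
proof -
  have ds: "ds \<noteq> []"
    using assms(1) by auto
  let ?B = "best_models ds m \<Delta>"
  have "cond_prob ds m \<alpha> \<Delta> = 1 \<longleftrightarrow> (\<forall>v\<in>?B. sat v \<alpha>)"
    unfolding cond_prob_eq_best_models_ratio[OF assms(2) ds]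
    by (intro weighted_sat_ratio_eq_1_iff best_models_nonempty[OF ds] best_models_prob_pos) simp
  also have "?B = mods_max \<Delta>"
    using assms(3) mods_p_max_eq_best_models[OF assms(2) ds] by simp
  also have "(\<forall>v\<in>mods_max \<Delta>. sat v \<alpha>) \<longleftrightarrow> (\<forall>S\<in>MCS \<Delta>. entails S \<alpha>)"
    unfolding mods_max_def entails_def by blast
  finally show ?thesis .
qed

end
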